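(* Let $b\ge2$ be an integer and let $\psi:\mathbb{R}\to\mathbb{R}$ be a $\mathbb{Z}$-periodic $C^1$ function which is not cohomologous to zero and satisfies $\int_0^1\psi(x)\,dx=0$. Then there exist $\gamma_1\in(0,1)$ and a positive integer $N$ such that for every $\gamma\in(\gamma_1,1)$ (with $\gamma>1/b$), $E(N,x)\ne\mathcal{A}^N\times\mathcal{A}^N$ for every $x\in\mathbb{R}$, where $E$ is computed with this $\gamma$ and $\psi$.
   Context: A $\mathbb{Z}$-periodic continuous $\psi$ is cohomologous to $0$ if there is a continuous $\mathbb{Z}$-periodic $f$ with $\psi(x)=f(bx)-f(x)$ for all $x$. $\mathcal{A}=\{0,\dots,b-1\}$. $S(x,\mathbf{i})=\sum_{n\ge1}\gamma^{n-1}\psi\big(\frac{x+i_1+i_2b+\cdots+i_nb^{n-1}}{b^n}\big)$ for $\mathbf{i}\in\mathcal{A}^{\mathbb{Z}^+}$, $S'=\partial_xS$. Sequences $\mathbf{i},\mathbf{j}$ are $(\varepsilon,\delta)$-tangent at $x_0$ if $|S(x_0,\mathbf{i})-S(x_0,\mathbf{j})|\le\varepsilon$ and $|S'(x_0,\mathbf{i})-S'(x_0,\mathbf{j})|\le\delta$. $E(q,x_0;\varepsilon,\delta)$: pairs $(\mathbf{k},\mathbf{l})\in\mathcal{A}^q\times\mathcal{A}^q$ such that some concatenations $\mathbf{ku},\mathbf{lv}$ are $(\varepsilon,\delta)$-tangent at $x_0$; $E(q,x_0)=\bigcap_{\varepsilon,\delta>0}E(q,x_0;\varepsilon,\delta)$.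 *)

theory Defs
  imports "HOL-Analysis.Analysis"
begin

text \<open>Digit sequences \<open>i \<in> A^{Z^+}\<close> are functions \<open>nat \<Rightarrow> nat\<close> with values in
  \<open>{0..<b}\<close>; the paper's \<open>i_1, i_2, ...\<close> are \<open>i 0, i 1, ...\<close>.\<close>

definition digit_seq :: "nat \<Rightarrow> (nat \<Rightarrow> nat) \<Rightarrow> bool" where
  "digit_seq b i \<longleftrightarrow> (\<forall>n. i n < b)"

definition words :: "nat \<Rightarrow> nat \<Rightarrow> nat list set" where
  "words b q = {k. length k = q \<and> (\<forall>d\<in>set k. d < b)}"

definition concat_seq :: "nat list \<Rightarrow> (nat \<Rightarrow> nat) \<Rightarrow> nat \<Rightarrow> nat" where
  "concat_seq k u = (\<lambda>n. if n < length k then k ! n else u (n - length k))"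

text \<open>\<open>S(x,i) = \<Sum>_{n\<ge>1} \<gamma>^{n-1} \<psi>((x + i_1 + i_2 b + ... + i_n b^{n-1}) / b^n)\<close>,
  reindexed with \<open>m = n - 1\<close>.\<close>
definition S :: "nat \<Rightarrow> real \<Rightarrow> (real \<Rightarrow> real) \<Rightarrow> real \<Rightarrow> (nat \<Rightarrow> nat) \<Rightarrow> real" where
  "S b \<gamma> \<psi> x i = (\<Sum>m. \<gamma> ^ m * \<psi> ((x + (\<Sum>j\<le>m. real (i j) * real b ^ j)) / real b ^ (m + 1)))"

definition S' :: "nat \<Rightarrow> real \<Rightarrow> (real \<Rightarrow> real) \<Rightarrow> real \<Rightarrow> (nat \<Rightarrow> nat) \<Rightarrow> real" where
  "S' b \<gamma> \<psi> x i = deriv (\<lambda>y. S b \<gamma> \<psi> y i) x"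

definition tangent :: "nat \<Rightarrow> real \<Rightarrow> (real \<Rightarrow> real) \<Rightarrow> real \<Rightarrow> real \<Rightarrow> real \<Rightarrow>
    (nat \<Rightarrow> nat) \<Rightarrow> (nat \<Rightarrow> nat) \<Rightarrow> bool" where
  "tangent b \<gamma> \<psi> \<epsilon> \<delta> x0 i j \<longleftrightarrow>
     \<bar>S b \<gamma> \<psi> x0 i - S b \<gamma> \<psi> x0 j\<bar> \<le> \<epsilon> \<and> \<bar>S' b \<gamma> \<psi> x0 i - S' b \<gamma> \<psi> x0 j\<bar> \<le> \<delta>"

definition E_eps :: "nat \<Rightarrow> real \<Rightarrow> (real \<Rightarrow> real) \<Rightarrow> nat \<Rightarrow> real \<Rightarrow> real \<Rightarrow> real \<Rightarrow>
    (nat list \<times> nat list) set" where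
  "E_eps b \<gamma> \<psi> q x0 \<epsilon> \<delta> = {(k, l). k \<in> words b q \<and> l \<in> words b q \<and>
     (\<exists>u v. digit_seq b u \<and> digit_seq b v \<and>
        tangent b \<gamma> \<psi> \<epsilon> \<delta> x0 (concat_seq k u) (concat_seq l v))}"

definition E :: "nat \<Rightarrow> real \<Rightarrow> (real \<Rightarrow> real) \<Rightarrow> nat \<Rightarrow> real \<Rightarrow> (nat list \<times> nat list) set" where
  "E b \<gamma> \<psi> q x0 = (\<Inter>\<epsilon>\<in>{0<..}. \<Inter>\<delta>\<in>{0<..}. E_eps b \<gamma> \<psi> q x0 \<epsilon> \<delta>)"

definition cohomologous_to_zero :: "nat \<Rightarrow> (real \<Rightarrow> real) \<Rightarrow> bool" where
  "cohomologous_to_zero b \<psi> \<longleftrightarrow> (\<exists>f. continuous_on UNIV f \<and> (\<forall>x. f (x + 1) = f x) \<and>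
      (\<forall>x. \<psi> x = f (real b * x) - f x))"

end

theory Submission
  imports Defs
begin

text \<open>Differentiating term by term, \<open>S'(x, i)\<close> is the series
  \<open>D(x, i) = \<Sum>\<^sub>m \<gamma>\<^sup>m \<psi>'(z\<^sub>m(x, i)) / b\<^sup>m\<^sup>+\<^sup>1\<close>, where \<open>z\<^sub>m(x, i)\<close> is the argument of \<open>\<psi>\<close>
  in the m-th term of S. If at \<open>\<gamma> = 1\<close> the sequences \<open>100\<dots>\<close> and \<open>000\<dots>\<close> had equal D-values
  everywhere, the derivative \<open>D(x, 000\<dots>)\<close> of \<open>F(x) = \<Sum>\<^sub>m (\<psi>(x/b\<^sup>m\<^sup>+\<^sup>1) - \<psi>(0))\<close> would be
  1-periodic; together with \<open>F(bx) = \<psi>(x) - \<psi>(0) + F(x)\<close> this makes F periodic, the mean-zero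
  condition gives \<open>\<psi>(0) = 0\<close>, and \<open>\<psi> = F(b\<cdot>) - F\<close> would be a coboundary.

  So the two D-values differ by some \<open>c\<^sub>1 > 0\<close> at some \<open>x\<^sub>0\<close>, and by continuity by more than \<open>c\<^sub>1/2\<close>
  for \<open>\<gamma>\<close> near 1 and x near \<open>x\<^sub>0\<close>. As \<open>D(x, a i) = (\<psi>'(y) + \<gamma> D(y, i)) / b\<close> with \<open>y = (x + a)/b\<close>, a
  bound c on all differences of D at x gives the bound \<open>(b/\<gamma>) c \<le> 2bc\<close> at y; so if all
  differences at some x were at most \<open>c = c\<^sub>1 / (2 (2b)\<^sup>M)\<close>, they would be at most \<open>c\<^sub>1/2\<close> at every \<open>(x + A)/b\<^sup>M\<close>, and one of these points lies within
  \<open>b\<^sup>-\<^sup>M\<close> of \<open>x\<^sub>0\<close> modulo 1. Hence at every x two sequences have D-values more than c apart, and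
  since D depends on the digits beyond position N only up to \<open>2 M\<^sub>1 / b\<^sup>N\<close>, their length-N
  prefixes cannot be tangent.\<close>

section \<open>Periodic functions\<close>

lemma periodic_add_of_int:
  fixes g :: "real \<Rightarrow> 'a"
  assumes "\<And>x. g (x + 1) = g x"
  shows "g (x + of_int k) = g x"
proof -
  have nat_shift: "g (x + real n) = g x" for x n
  proof (induction n arbitrary: x)
    case (Suc n)
    have "g (x + real (Suc n)) = g ((x + 1) + real n)" by (simp add: algebra_simps)
    also have "\<dots> = g x" using Suc assms by simp
    finally show ?case .
  qed simp
  show ?thesis
  proof (cases "k \<ge> 0")
    case True
    then show ?thesis using nat_shift[of x "nat k"] by simp
  next
    case False
    then show ?thesis using nat_shift[of "x + of_int k" "nat (- k)"] by simp
  qed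
qed

lemma periodic_reduce_mod_1:
  fixes g :: "real \<Rightarrow> 'a"
  assumes "\<And>x. g (x + 1) = g x"
  shows "g x = g (x - of_int \<lfloor>x\<rfloor>)" and "x - of_int \<lfloor>x\<rfloor> \<in> {0..1}"
proof -
  show "g x = g (x - of_int \<lfloor>x\<rfloor>)"
    using periodic_add_of_int[of g, OF assms, of "x - of_int \<lfloor>x\<rfloor>" "\<lfloor>x\<rfloor>"] by simp
  show "x - of_int \<lfloor>x\<rfloor> \<in> {0..1}"
    unfolding atLeastAtMost_iff using of_int_floor_le[of x] real_of_int_floor_add_one_gt[of x] by linarith
qed

lemma periodic_continuous_bounded:
  fixes g :: "real \<Rightarrow> real"
  assumes per: "\<And>x. g (x + 1) = g x" and cont: "continuous_on UNIV g"
  shows "\<exists>M>0. \<forall>x. \<bar>g x\<bar> \<le> M"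
proof -
  have "compact (g ` {0..1})"
    by (rule compact_continuous_image) (use cont continuous_on_subset in auto)
  then obtain B where B: "\<forall>y\<in>g ` {0..1}. \<bar>y\<bar> \<le> B"
    by (meson compact_imp_bounded bounded_real)
  have "\<bar>g x\<bar> \<le> B" for x
    using B periodic_reduce_mod_1[of g, OF per, of x] by (metis image_eqI)
  then have "\<bar>g x\<bar> \<le> max B 1" for x
    by (meson max.coboundedI1)
  then show ?thesis by (intro exI[of _ "max B 1"]) auto
qed

lemma periodic_continuous_uniformly_continuous:
  fixes g :: "real \<Rightarrow> real"
  assumes per: "\<And>x. g (x + 1) = g x" and cont: "continuous_on UNIV g" and "e > 0"
  shows "\<exists>\<delta>>0. \<forall>u v. \<bar>u - v\<bar> < \<delta> \<longrightarrow> \<bar>g u - g v\<bar> < e"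
proof -
  have "uniformly_continuous_on {-1..2} g"
    by (rule compact_uniformly_continuous) (use cont continuous_on_subset in auto)
  then obtain \<delta> where "\<delta> > 0"
    and \<delta>: "\<And>u v. u \<in> {-1..2} \<Longrightarrow> v \<in> {-1..2} \<Longrightarrow> dist v u < \<delta>
                  \<Longrightarrow> dist (g v) (g u) < e"
    unfolding uniformly_continuous_on_def using \<open>e > 0\<close> by metis
  show ?thesis
  proof (intro exI[of _ "min \<delta> 1"] conjI allI impI)
    fix u v :: real
    assume uv: "\<bar>u - v\<bar> < min \<delta> 1"
    define k where "k = \<lfloor>u\<rfloor>"
    have "u - of_int k \<in> {-1..2}" "v - of_int k \<in> {-1..2}"
      using periodic_reduce_mod_1(2)[of g, OF per, of u] uv unfolding k_def atLeastAtMost_iff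
      by linarith+
    then have "\<bar>g (u - of_int k) - g (v - of_int k)\<bar> < e"
      using \<delta> uv by (auto simp: dist_real_def abs_minus_commute)
    then show "\<bar>g u - g v\<bar> < e"
      using periodic_add_of_int[of g, OF per, of "u - of_int k" k]
        periodic_add_of_int[of g, OF per, of "v - of_int k" k] by simp
  qed (use \<open>\<delta> > 0\<close> in auto)
qed

lemma integral_periodic_dilation:
  fixes F :: "real \<Rightarrow> real"
  assumes per: "\<And>x. F (x + 1) = F x" and cont: "continuous_on UNIV F" and "k \<ge> 1"
  shows "integral {0..1} (\<lambda>y. F (real k * y)) = integral {0..1} F"
proof -
  define I where "I = integral {0..1} F"
  have "(F has_integral I) {0..1}" unfolding I_def
    by (rule integrable_integral, rule integrable_continuous_interval)
      (use cont continuous_on_subset in auto)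
  then have "((\<lambda>x. F (1 *\<^sub>R x + real n)) has_integral I) {0..1}" for n :: nat
    by (rule has_integral_eq[rotated]) (use periodic_add_of_int[of F, OF per, of _ "int n"] in simp)
  then have shifted: "(F has_integral I) {real n..real n + 1}" for n :: nat
    using has_integral_affinity_iff[where m=1 and f=F and c="real n" and I=I and a="real n" and b="real n + 1"]
    by (simp add: cbox_interval)
  have "(F has_integral (real n * I)) {0..real n}" for n :: nat
  proof (induction n)
    case 0
    then show ?case using has_integral_refl(1)[of F "0::real"] by (simp add: cbox_interval)
  next
    case (Suc n)
    have "(F has_integral (real n * I + I)) {0..real n + 1}"
      by (rule has_integral_combine[OF _ _ Suc shifted]) auto
    then show ?case by (simp add: algebra_simps)
  qed
  then have "(F has_integral (real k * I)) (cbox 0 (real k))" by (simp add: cbox_interval)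
  then have "((\<lambda>y. F (real k * y)) has_integral I) {0..1}"
    using has_integral_affinity_iff[where m="real k" and f=F and c=0 and I="real k * I" and a=0 and b="real k"]
      \<open>k \<ge> 1\<close> by (simp add: cbox_interval field_simps)
  then show ?thesis unfolding I_def by (rule integral_unique)
qed

lemma integral_coboundary_plus_const:
  fixes F :: "real \<Rightarrow> real"
  assumes "\<And>x. F (x + 1) = F x" and cont: "continuous_on UNIV F" and "k \<ge> 1"
  shows "integral {0..1} (\<lambda>y. F (real k * y) - F y + c) = c"
proof -
  have "continuous_on UNIV (\<lambda>y. F (real k * y))"
    by (rule continuous_on_compose2[OF cont]) (auto intro!: continuous_intros)
  then have dilated: "(\<lambda>y. F (real k * y)) integrable_on {0..1}"
    by (rule integrable_continuous_interval[OF continuous_on_subset]) auto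
  have "F integrable_on {0..1}"
    by (rule integrable_continuous_interval[OF continuous_on_subset[OF cont]]) auto
  then have "integral {0..1} (\<lambda>y. F (real k * y) - F y + c)
      = integral {0..1} (\<lambda>y. F (real k * y)) - integral {0..1} F + c"
    using integral_add[OF integrable_diff[OF dilated] integrable_const_ivl] integral_diff[OF dilated]
    by simp
  then show ?thesis using integral_periodic_dilation[OF assms] by simp
qed

lemma periodic_of_dilation_equation:
  fixes F f g :: "real \<Rightarrow> real" and k :: nat
  assumes F': "\<And>y. (F has_real_derivative f y) (at y)" and f_per: "\<And>y. f (y + 1) = f y"
    and g_per: "\<And>y. g (y + 1) = g y" and dilation: "\<And>y. F (real k * y) = g y + F y" and "k \<noteq> 1"
  shows "F (y + 1) = F y"
proof -
  define step where "step = F 1 - F 0"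
  have "((\<lambda>y. F (y + 1)) has_real_derivative f (y + 1) * 1) (at y)" for y
    by (rule DERIV_chain2[OF F']) (auto intro!: derivative_eq_intros)
  then have "((\<lambda>y. F (y + 1) - F y) has_real_derivative 0) (at y)" for y
    using DERIV_diff[OF _ F'[of y]] f_per[of y] by fastforce
  then have increment: "F (y + 1) - F y = step" for y
    using DERIV_isconst_all[of "\<lambda>y. F (y + 1) - F y" y 0] unfolding step_def by simp
  have "F (y + real n) = F y + real n * step" for y n
  proof (induction n)
    case (Suc n)
    then show ?case using increment[of "y + real n"] by (simp add: algebra_simps)
  qed simp
  then have "F (real k) = F 0 + real k * step" by (metis add_0)
  moreover have "F (real k) = F 0 + step"
    using dilation[of 1] dilation[of 0] g_per[of 0] increment[of 0] by simp
  ultimately have "(real k - 1) * step = 0" by (simp add: algebra_simps)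
  then show ?thesis using increment[of y] \<open>k \<noteq> 1\<close> by simp
qed

lemma inverse_power_Suc_sums:
  fixes r :: real
  assumes "r > 1"
  shows "(\<lambda>m. (1 / r) ^ (m + 1)) sums (1 / (r - 1))"
proof -
  have "(\<lambda>m. (1 / r) * (1 / r) ^ m) sums ((1 / r) * (1 / (1 - 1 / r)))"
    by (rule sums_mult[OF geometric_sums]) (use assms in auto)
  moreover have "(1 / r) * (1 / (1 - 1 / r)) = 1 / (r - 1)" using assms by (simp add: field_simps)
  ultimately show ?thesis by simp
qed

lemma series_dominated_by_geometric:
  fixes f :: "nat \<Rightarrow> real" and r :: real
  assumes "r > 1" and dom: "\<And>m. \<bar>f m\<bar> \<le> C * (1 / r) ^ (m + 1)"
  shows "summable f" and "\<bar>suminf f\<bar> \<le> C / (r - 1)"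
proof -
  have majorant: "(\<lambda>m. C * (1 / r) ^ (m + 1)) sums (C / (r - 1))"
    using sums_mult[OF inverse_power_Suc_sums[OF assms(1)], of C] by simp
  show "summable f"
    by (rule summable_comparison_test[OF _ sums_summable[OF majorant]]) (use dom in auto)
  have "norm (suminf f) \<le> (\<Sum>m. C * (1 / r) ^ (m + 1))"
    by (rule norm_suminf_le[OF _ sums_summable[OF majorant]]) (use dom in auto)
  then show "\<bar>suminf f\<bar> \<le> C / (r - 1)" using sums_unique[OF majorant] by simp
qed

lemma one_minus_power_over_power_sums:
  fixes r \<gamma> :: real
  assumes "r > 1" "0 \<le> \<gamma>" "\<gamma> \<le> 1"
  shows "(\<lambda>m. (1 - \<gamma> ^ m) / r ^ (m + 1)) sums ((1 - \<gamma>) / ((r - 1) * (r - \<gamma>)))"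
proof -
  have "(\<lambda>m. (1 / r) * (\<gamma> / r) ^ m) sums ((1 / r) * (1 / (1 - \<gamma> / r)))"
    by (rule sums_mult[OF geometric_sums]) (use assms in auto)
  then have "(\<lambda>m. \<gamma> ^ m / r ^ (m + 1)) sums (1 / (r - \<gamma>))"
    using assms by (simp add: field_simps)
  from sums_diff[OF inverse_power_Suc_sums[OF assms(1)] this]
  have "(\<lambda>m. (1 - \<gamma> ^ m) / r ^ (m + 1)) sums (1 / (r - 1) - 1 / (r - \<gamma>))"
    by (simp add: power_divide diff_divide_distrib)
  moreover have "1 / (r - 1) - 1 / (r - \<gamma>) = (1 - \<gamma>) / ((r - 1) * (r - \<gamma>))"
    using assms by (simp add: field_simps)
  ultimately show ?thesis by simp
qed

section \<open>Digit expansions\<close>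

definition digit_point :: "nat \<Rightarrow> real \<Rightarrow> (nat \<Rightarrow> nat) \<Rightarrow> nat \<Rightarrow> real" where
  "digit_point b x i m = (x + (\<Sum>j\<le>m. real (i j) * real b ^ j)) / real b ^ (m + 1)"

definition S_termwise_deriv ::
    "nat \<Rightarrow> real \<Rightarrow> (real \<Rightarrow> real) \<Rightarrow> real \<Rightarrow> (nat \<Rightarrow> nat) \<Rightarrow> real" where
  "S_termwise_deriv b \<gamma> g x i = (\<Sum>m. \<gamma> ^ m * g (digit_point b x i m) / real b ^ (m + 1))"

lemma digit_point_0: "digit_point b x i 0 = (x + real (i 0)) / real b"
  by (simp add: digit_point_def)

lemma digit_point_Suc:
  assumes "b > 0"
  shows "digit_point b x i (Suc m) = digit_point b ((x + real (i 0)) / real b) (\<lambda>n. i (Suc n)) m"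
proof -
  have "(\<Sum>j\<le>Suc m. real (i j) * real b ^ j)
      = real (i 0) + real b * (\<Sum>j\<le>m. real (i (Suc j)) * real b ^ j)"
    by (subst sum.atMost_Suc_shift) (simp add: sum_distrib_left algebra_simps)
  then show ?thesis using assms unfolding digit_point_def by (simp add: field_simps)
qed

lemma digit_point_cong:
  assumes "\<And>j. j \<le> m \<Longrightarrow> i j = i' j"
  shows "digit_point b x i m = digit_point b x i' m"
  unfolding digit_point_def using assms by simp

lemma digit_point_diff: "digit_point b y i m - digit_point b x i m = (y - x) / real b ^ (m + 1)"
  unfolding digit_point_def by (simp add: diff_divide_distrib[symmetric])

lemma digit_point_zeros: "digit_point b x (\<lambda>_. 0) m = x / real b ^ (m + 1)"
  by (simp add: digit_point_def)

lemma digit_point_unit: "digit_point b x (\<lambda>n. if n = 0 then 1 else 0) m = digit_point b (x + 1) (\<lambda>_. 0) m"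
proof -
  have "(\<Sum>j\<le>m. real (if j = 0 then 1 else 0) * real b ^ j) = 1"
    by (induction m) auto
  then show ?thesis by (simp add: digit_point_def)
qed

text \<open>Adding an integer n to x amounts to adding n to the b-adic integer with digits i; the
  digits of the sum are computed by \<open>digit_shift\<close>, and each \<open>digit_point\<close> moves by an integer.\<close>

definition digit_value :: "nat \<Rightarrow> (nat \<Rightarrow> nat) \<Rightarrow> nat \<Rightarrow> int" where
  "digit_value b i m = (\<Sum>j\<le>m. int (i j) * int b ^ j)"

definition digit_shift :: "nat \<Rightarrow> int \<Rightarrow> (nat \<Rightarrow> nat) \<Rightarrow> nat \<Rightarrow> nat" where
  "digit_shift b n i j = nat (((digit_value b i j + n) div int b ^ j) mod int b)"

lemma digit_seq_digit_shift: "b > 0 \<Longrightarrow> digit_seq b (digit_shift b n i)"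
  unfolding digit_seq_def digit_shift_def by (simp add: nat_less_iff)

lemma digit_value_digit_shift:
  assumes "b > 0"
  shows "digit_value b (digit_shift b n i) m = (digit_value b i m + n) mod int b ^ (m + 1)"
proof (induction m)
  case 0
  then show ?case using assms by (simp add: digit_shift_def digit_value_def)
next
  case (Suc m)
  define X where "X = digit_value b i (Suc m) + n"
  define B where "B = int b ^ (m + 1)"
  have "X = (digit_value b i m + n) + int (i (Suc m)) * B"
    unfolding X_def B_def digit_value_def by simp
  then have low: "X mod B = (digit_value b i m + n) mod B" by simp
  have "X mod (B * int b) = B * (X div B mod int b) + X mod B"
    by (rule zmod_zmult2_eq) (use assms in simp)
  moreover have "int (digit_shift b n i (Suc m)) = X div B mod int b"
    unfolding digit_shift_def X_def B_def using assms by simp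
  ultimately show ?case
    using Suc low unfolding X_def B_def digit_value_def by (simp add: mult.commute)
qed

lemma digit_point_add_of_int:
  assumes "b > 0"
  obtains k :: int where "digit_point b (x + of_int n) i m = digit_point b x (digit_shift b n i) m + of_int k"
proof -
  define B where "B = int b ^ (m + 1)"
  define p where "p = real b ^ (m + 1)"
  define Y where "Y = digit_value b i m + n"
  have real_digit_value: "(\<Sum>j\<le>m. real (i' j) * real b ^ j) = of_int (digit_value b i' m)" for i'
    unfolding digit_value_def by simp
  have "p > 0" "real_of_int B = p" unfolding p_def B_def using assms by simp_all
  moreover have "real_of_int Y = of_int (Y mod B) + of_int (Y div B) * real_of_int B"
    by (metis add.commute div_mult_mod_eq of_int_add of_int_mult)
  ultimately have "(x + of_int Y) / p = (x + of_int (Y mod B)) / p + of_int (Y div B)"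
    by (simp add: field_simps)
  moreover have "digit_point b (x + of_int n) i m = (x + of_int Y) / p"
    unfolding digit_point_def real_digit_value Y_def p_def by simp
  moreover have "(x + of_int (Y mod B)) / p = digit_point b x (digit_shift b n i) m"
    unfolding digit_point_def real_digit_value digit_value_digit_shift[OF assms] Y_def B_def p_def ..
  ultimately show ?thesis using that by simp
qed

lemma b_adic_approximation:
  assumes "b > 0"
  obtains A :: nat and t :: int
  where "A < b ^ M" and "\<bar>(x + real A) / real b ^ M + of_int t - x0\<bar> < (1 / real b) ^ M"
proof -
  define B :: int where "B = int b ^ M"
  define p where "p = real b ^ M"
  define K where "K = \<lfloor>x0 * p - x\<rfloor>"
  have "B > 0" "real_of_int B = p" "p > 0" unfolding B_def p_def using assms by simp_all
  have "nat (K mod B) < b ^ M"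
    using \<open>B > 0\<close> unfolding B_def by (simp add: nat_less_iff)
  moreover have "real (nat (K mod B)) = of_int K - of_int (K div B) * p"
    using \<open>B > 0\<close> \<open>real_of_int B = p\<close>
    by (metis add_diff_cancel_left' div_mult_mod_eq of_int_add of_int_mult of_nat_nat pos_mod_sign)
  then have "(x + real (nat (K mod B))) / p + of_int (K div B) - x0 = (x + of_int K - x0 * p) / p"
    using \<open>p > 0\<close> by (simp add: field_simps)
  moreover have "\<bar>x + of_int K - x0 * p\<bar> < 1"
    unfolding K_def by linarith
  then have "\<bar>x + of_int K - x0 * p\<bar> / p < 1 / p"
    using \<open>p > 0\<close> by (simp add: divide_strict_right_mono)
  ultimately show ?thesis
    by (intro that[of "nat (K mod B)" "K div B"]) (simp_all add: p_def power_divide)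
qed

section \<open>The termwise derivative of S\<close>

locale periodic_C1 =
  fixes b :: nat and \<psi> :: "real \<Rightarrow> real"
  assumes base: "b \<ge> 2"
    and periodic: "\<And>x. \<psi> (x + 1) = \<psi> x"
    and differentiable: "\<And>x. \<psi> differentiable at x"
    and deriv_continuous: "continuous_on UNIV (deriv \<psi>)"
begin

abbreviation \<psi>' :: "real \<Rightarrow> real" where "\<psi>' \<equiv> deriv \<psi>"

abbreviation D :: "real \<Rightarrow> real \<Rightarrow> (nat \<Rightarrow> nat) \<Rightarrow> real" where
  "D \<gamma> x i \<equiv> S_termwise_deriv b \<gamma> \<psi>' x i"

lemma base_gt_1: "real b > 1"
  using base by simp

lemma has_deriv_psi: "(\<psi> has_real_derivative \<psi>' x) (at x)"
  using differentiable DERIV_deriv_iff_real_differentiable by blast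

lemma deriv_periodic: "\<psi>' (x + 1) = \<psi>' x"
proof -
  have "((\<lambda>t. \<psi> (t + 1)) has_real_derivative \<psi>' (x + 1) * 1) (at x)"
    by (rule DERIV_chain2[OF has_deriv_psi]) (auto intro!: derivative_eq_intros)
  then have "(\<psi> has_real_derivative \<psi>' (x + 1)) (at x)" using periodic by simp
  then show ?thesis using has_deriv_psi DERIV_unique by blast
qed

lemma continuous_psi: "continuous_on UNIV \<psi>"
  by (rule differentiable_imp_continuous_on) (simp add: differentiable_on_def differentiable)

definition M0 :: real where "M0 = (SOME M. M > 0 \<and> (\<forall>x. \<bar>\<psi> x\<bar> \<le> M))"
definition M1 :: real where "M1 = (SOME M. M > 0 \<and> (\<forall>x. \<bar>\<psi>' x\<bar> \<le> M))"

lemma M0: "M0 > 0" "\<bar>\<psi> x\<bar> \<le> M0"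
  using someI_ex[OF periodic_continuous_bounded[of \<psi>, OF periodic continuous_psi]]
  unfolding M0_def by auto

lemma M1: "M1 > 0" "\<bar>\<psi>' x\<bar> \<le> M1"
  using someI_ex[OF periodic_continuous_bounded[of \<psi>', OF deriv_periodic deriv_continuous]]
  unfolding M1_def by auto

lemma D_term_bound:
  assumes "0 \<le> \<gamma>" "\<gamma> \<le> 1"
  shows "\<bar>\<gamma> ^ m * \<psi>' (digit_point b x i m) / real b ^ (m + 1)\<bar> \<le> M1 * (1 / real b) ^ (m + 1)"
proof -
  have "\<bar>\<gamma> ^ m * \<psi>' (digit_point b x i m)\<bar> \<le> 1 * M1"
    unfolding abs_mult using assms by (intro mult_mono M1) (auto simp: power_le_one)
  then show ?thesis using base by (simp add: power_divide divide_right_mono)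
qed

lemma D_summable:
  assumes "0 \<le> \<gamma>" "\<gamma> \<le> 1"
  shows "summable (\<lambda>m. \<gamma> ^ m * \<psi>' (digit_point b x i m) / real b ^ (m + 1))"
  using series_dominated_by_geometric(1)[OF base_gt_1 D_term_bound[OF assms]] .

lemma D_Cons:
  assumes "0 \<le> \<gamma>" "\<gamma> \<le> 1"
  shows "D \<gamma> x i = (\<psi>' ((x + real (i 0)) / real b)
                      + \<gamma> * D \<gamma> ((x + real (i 0)) / real b) (\<lambda>n. i (Suc n))) / real b"
proof -
  define y where "y = (x + real (i 0)) / real b"
  define t where "t = (\<lambda>m. \<gamma> ^ m * \<psi>' (digit_point b x i m) / real b ^ (m + 1))"
  define t' where "t' = (\<lambda>m. \<gamma> ^ m * \<psi>' (digit_point b y (\<lambda>n. i (Suc n)) m) / real b ^ (m + 1))"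
  have "summable t" "summable t'" unfolding t_def t'_def by (rule D_summable[OF assms])+
  have shift: "t (Suc m) = (\<gamma> / real b) * t' m" for m
    unfolding t_def t'_def y_def using base by (simp add: digit_point_Suc field_simps)
  have "(\<gamma> / real b) * suminf t' = (\<Sum>m. t (Suc m))"
    unfolding shift by (rule suminf_mult[OF \<open>summable t'\<close>, symmetric])
  also have "\<dots> = suminf t - t 0" by (rule suminf_split_head[OF \<open>summable t\<close>])
  moreover have "t 0 = \<psi>' y / real b" unfolding t_def y_def by (simp add: digit_point_0)
  ultimately show ?thesis
    unfolding S_termwise_deriv_def t_def[symmetric] t'_def[symmetric] y_def[symmetric]
    using base by (simp add: field_simps)
qed

lemma D_diff:
  assumes "0 \<le> \<gamma>" "\<gamma> \<le> 1" "0 \<le> \<gamma>'" "\<gamma>' \<le> 1"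
  shows "D \<gamma> y j - D \<gamma>' x i = (\<Sum>m. \<gamma> ^ m * \<psi>' (digit_point b y j m) / real b ^ (m + 1)
                                   - \<gamma>' ^ m * \<psi>' (digit_point b x i m) / real b ^ (m + 1))"
  unfolding S_termwise_deriv_def by (rule suminf_diff[OF D_summable[OF assms(1,2)] D_summable[OF assms(3,4)]])

lemma div_base_pred_le: "C \<ge> 0 \<Longrightarrow> C / (real b - 1) \<le> C"
  using base by (simp add: divide_le_eq mult_le_cancel_left1)

lemma D_prefix_close:
  assumes "0 \<le> \<gamma>" "\<gamma> \<le> 1" and same_prefix: "\<And>j. j < N \<Longrightarrow> p j = q j"
  shows "\<bar>D \<gamma> x p - D \<gamma> x q\<bar> \<le> 2 * M1 / real b ^ N"
proof -
  define \<delta> where "\<delta> m = \<gamma> ^ m * \<psi>' (digit_point b x p m) / real b ^ (m + 1)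
                     - \<gamma> ^ m * \<psi>' (digit_point b x q m) / real b ^ (m + 1)" for m
  have "summable \<delta>" unfolding \<delta>_def by (intro summable_diff D_summable assms)
  have "\<delta> m = 0" if "m < N" for m
    unfolding \<delta>_def using digit_point_cong[of m p q] same_prefix that by simp
  then have tail: "suminf \<delta> = (\<Sum>m. \<delta> (m + N))"
    using suminf_split_initial_segment[OF \<open>summable \<delta>\<close>, of N] by simp
  have "D \<gamma> x p - D \<gamma> x q = suminf \<delta>"
    unfolding \<delta>_def by (rule D_diff[OF assms(1,2,1,2)])
  moreover have "\<bar>\<delta> (m + N)\<bar> \<le> (2 * M1 / real b ^ N) * (1 / real b) ^ (m + 1)" for m
  proof -
    have "\<bar>\<delta> (m + N)\<bar> \<le> 2 * (M1 * (1 / real b) ^ (m + N + 1))"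
      unfolding \<delta>_def using D_term_bound[OF assms(1,2), of "m + N" x p] D_term_bound[OF assms(1,2), of "m + N" x q]
      by linarith
    also have "\<dots> = (2 * M1 / real b ^ N) * (1 / real b) ^ (m + 1)"
      by (simp add: power_add field_simps)
    finally show ?thesis .
  qed
  then have "\<bar>\<Sum>m. \<delta> (m + N)\<bar> \<le> (2 * M1 / real b ^ N) / (real b - 1)"
    by (rule series_dominated_by_geometric(2)[OF base_gt_1])
  moreover have "(2 * M1 / real b ^ N) / (real b - 1) \<le> 2 * M1 / real b ^ N"
    by (rule div_base_pred_le) (use M1 in simp)
  ultimately show ?thesis using tail by simp
qed

lemma D_close_to_D_1:
  assumes "0 \<le> \<gamma>" "\<gamma> \<le> 1"
  shows "\<bar>D \<gamma> x i - D 1 x i\<bar> \<le> M1 * (1 - \<gamma>)"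
proof -
  define \<delta> where "\<delta> m = 1 ^ m * \<psi>' (digit_point b x i m) / real b ^ (m + 1)
                     - \<gamma> ^ m * \<psi>' (digit_point b x i m) / real b ^ (m + 1)" for m
  have majorant: "(\<lambda>m. M1 * ((1 - \<gamma> ^ m) / real b ^ (m + 1)))
                    sums (M1 * ((1 - \<gamma>) / ((real b - 1) * (real b - \<gamma>))))"
    by (rule sums_mult[OF one_minus_power_over_power_sums[OF base_gt_1 assms]])
  have "norm (\<delta> m) \<le> M1 * ((1 - \<gamma> ^ m) / real b ^ (m + 1))" for m
  proof -
    have "\<gamma> ^ m \<le> 1" using assms by (simp add: power_le_one)
    have "\<delta> m = (1 - \<gamma> ^ m) * \<psi>' (digit_point b x i m) / real b ^ (m + 1)"
      unfolding \<delta>_def by (simp add: diff_divide_distrib left_diff_distrib)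
    then have "norm (\<delta> m) = (1 - \<gamma> ^ m) * \<bar>\<psi>' (digit_point b x i m)\<bar> / real b ^ (m + 1)"
      using \<open>\<gamma> ^ m \<le> 1\<close> by (simp add: abs_mult)
    also have "\<dots> \<le> (1 - \<gamma> ^ m) * M1 / real b ^ (m + 1)"
      using \<open>\<gamma> ^ m \<le> 1\<close> by (intro divide_right_mono mult_left_mono M1) auto
    finally show ?thesis by (simp add: mult.commute)
  qed
  then have "norm (suminf \<delta>) \<le> M1 * ((1 - \<gamma>) / ((real b - 1) * (real b - \<gamma>)))"
    using norm_suminf_le[OF _ sums_summable[OF majorant]] sums_unique[OF majorant] by metis
  also have "\<dots> \<le> M1 * (1 - \<gamma>)"
  proof -
    have "(real b - 1) * (real b - \<gamma>) \<ge> 1 * 1" using base assms by (intro mult_mono) auto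
    then have "(1 - \<gamma>) / ((real b - 1) * (real b - \<gamma>)) \<le> 1 - \<gamma>"
      using assms by (simp add: divide_le_eq mult_le_cancel_left1)
    then show ?thesis using M1 by (intro mult_left_mono) auto
  qed
  finally show ?thesis
    using D_diff[where \<gamma>=1 and \<gamma>'=\<gamma> and y=x and j=i and x=x and i=i] assms
    unfolding \<delta>_def[symmetric] by (simp add: abs_minus_commute)
qed

lemma D_continuity:
  assumes "0 \<le> \<gamma>" "\<gamma> \<le> 1"
    and unif: "\<And>u v. \<bar>u - v\<bar> < \<delta> \<Longrightarrow> \<bar>\<psi>' u - \<psi>' v\<bar> \<le> e" and "\<bar>y - x\<bar> < \<delta>"
  shows "\<bar>D \<gamma> y i - D \<gamma> x i\<bar> \<le> e"
proof -
  have "e \<ge> 0" using unif[of x x] \<open>\<bar>y - x\<bar> < \<delta>\<close> by simp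
  define d where "d m = \<gamma> ^ m * \<psi>' (digit_point b y i m) / real b ^ (m + 1)
                     - \<gamma> ^ m * \<psi>' (digit_point b x i m) / real b ^ (m + 1)" for m
  have "\<bar>d m\<bar> \<le> e * (1 / real b) ^ (m + 1)" for m
  proof -
    have "real b ^ (m + 1) \<ge> 1" using base_gt_1 by (simp only: one_le_power less_imp_le)
    then have "\<bar>digit_point b y i m - digit_point b x i m\<bar> \<le> \<bar>y - x\<bar>"
      by (simp add: digit_point_diff divide_le_eq mult_le_cancel_left1)
    then have "\<bar>\<psi>' (digit_point b y i m) - \<psi>' (digit_point b x i m)\<bar> \<le> e"
      using unif \<open>\<bar>y - x\<bar> < \<delta>\<close> by simp
    moreover have "\<bar>\<gamma> ^ m\<bar> \<le> 1" using assms by (simp add: power_le_one)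
    ultimately have "\<bar>\<gamma> ^ m * (\<psi>' (digit_point b y i m) - \<psi>' (digit_point b x i m))\<bar> \<le> 1 * e"
      unfolding abs_mult by (intro mult_mono) auto
    moreover have "d m = \<gamma> ^ m * (\<psi>' (digit_point b y i m) - \<psi>' (digit_point b x i m)) * (1 / real b) ^ (m + 1)"
      unfolding d_def using base by (simp add: field_simps power_divide)
    moreover have "\<bar>(1 / real b) ^ (m + 1)\<bar> = (1 / real b) ^ (m + 1)" by simp
    ultimately have "\<bar>d m\<bar> \<le> (1 * e) * (1 / real b) ^ (m + 1)"
      by (simp only: abs_mult) (intro mult_right_mono, auto)
    then show ?thesis by simp
  qed
  then have "\<bar>suminf d\<bar> \<le> e / (real b - 1)" by (rule series_dominated_by_geometric(2)[OF base_gt_1])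
  also have "\<dots> \<le> e" by (rule div_base_pred_le[OF \<open>e \<ge> 0\<close>])
  finally show ?thesis using D_diff[OF assms(1,2,1,2), of y i x i] unfolding d_def[symmetric] by simp
qed

lemma series_has_derivative_D:
  assumes "0 \<le> \<gamma>" "\<gamma> \<le> 1"
    and summable_at: "summable (\<lambda>m. \<gamma> ^ m * (\<psi> (digit_point b x0 i m) - c m))"
  shows "summable (\<lambda>m. \<gamma> ^ m * (\<psi> (digit_point b x i m) - c m))"
    and "((\<lambda>y. \<Sum>m. \<gamma> ^ m * (\<psi> (digit_point b y i m) - c m)) has_real_derivative D \<gamma> x i) (at x)"
proof -
  define f where "f m y = \<gamma> ^ m * (\<psi> (digit_point b y i m) - c m)" for m y
  define f' where "f' m y = \<gamma> ^ m * \<psi>' (digit_point b y i m) / real b ^ (m + 1)" for m y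
  have derivative: "(f m has_field_derivative f' m y) (at y within UNIV)" for m y
  proof -
    have "((\<lambda>y. digit_point b y i m) has_real_derivative 1 / real b ^ (m + 1)) (at y)"
      unfolding digit_point_def using base by (auto intro!: derivative_eq_intros)
    from DERIV_chain2[OF has_deriv_psi this]
    have "((\<lambda>y. \<psi> (digit_point b y i m)) has_real_derivative
            \<psi>' (digit_point b y i m) * (1 / real b ^ (m + 1))) (at y)" .
    from DERIV_cmult[OF DERIV_diff[OF this DERIV_const[of "c m"]], of "\<gamma> ^ m"]
    show ?thesis unfolding f_def f'_def by simp
  qed
  have uniform: "uniformly_convergent_on UNIV (\<lambda>n y. \<Sum>m<n. f' m y)"
    using sums_mult[OF inverse_power_Suc_sums[OF base_gt_1], of M1] D_term_bound[OF assms(1,2)]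
    by (intro Weierstrass_m_test'[OF _ sums_summable]) (auto simp: f'_def)
  have "summable (\<lambda>m. f m x)" "((\<lambda>y. \<Sum>m. f m y) has_field_derivative (\<Sum>m. f' m x)) (at x)"
    using has_field_derivative_series'[OF convex_UNIV derivative uniform UNIV_I summable_at[folded f_def]]
    by simp_all
  then show "summable (\<lambda>m. \<gamma> ^ m * (\<psi> (digit_point b x i m) - c m))"
    and "((\<lambda>y. \<Sum>m. \<gamma> ^ m * (\<psi> (digit_point b y i m) - c m)) has_real_derivative D \<gamma> x i) (at x)"
    unfolding f_def f'_def S_termwise_deriv_def by simp_all
qed

lemma S_has_derivative:
  assumes "0 \<le> \<gamma>" "\<gamma> < 1"
  shows "((\<lambda>y. S b \<gamma> \<psi> y i) has_real_derivative D \<gamma> x i) (at x)"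
proof -
  have "\<bar>\<gamma> ^ m * (\<psi> (digit_point b 0 i m) - 0)\<bar> \<le> M0 * \<gamma> ^ m" for m
    using mult_left_mono[OF M0(2)[of "digit_point b 0 i m"], of "\<gamma> ^ m"] assms
    by (simp add: abs_mult mult.commute)
  then have "summable (\<lambda>m. \<gamma> ^ m * (\<psi> (digit_point b 0 i m) - 0))"
    using assms by (intro summable_comparison_test'[OF summable_mult[OF summable_geometric]]) auto
  from series_has_derivative_D(2)[OF assms(1) less_imp_le[OF assms(2)] this]
  show ?thesis unfolding S_def digit_point_def by simp
qed

lemma S'_eq_D:
  assumes "0 \<le> \<gamma>" "\<gamma> < 1"
  shows "S' b \<gamma> \<psi> x i = D \<gamma> x i"
  unfolding S'_def using S_has_derivative[OF assms] by (rule DERIV_imp_deriv)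

lemma D_unit_digit: "D \<gamma> x (\<lambda>n. if n = 0 then 1 else 0) = D \<gamma> (x + 1) (\<lambda>_. 0)"
  unfolding S_termwise_deriv_def digit_point_unit ..

lemma cohomologous_to_zero_if_D_periodic:
  assumes D_periodic: "\<And>y. D 1 (y + 1) (\<lambda>_. 0) = D 1 y (\<lambda>_. 0)"
    and mean_zero: "integral {0..1} \<psi> = 0"
  shows "cohomologous_to_zero b \<psi>"
proof -
  define f where "f m y = 1 ^ m * (\<psi> (digit_point b y (\<lambda>_. 0) m) - \<psi> 0)" for m y
  define F where "F y = (\<Sum>m. f m y)" for y
  have "summable (\<lambda>m. f m 0)" unfolding f_def by (simp add: digit_point_zeros)
  note F_series =
    series_has_derivative_D[of 1, OF zero_le_one order_refl this[unfolded f_def], folded f_def]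
  have F': "(F has_real_derivative D 1 y (\<lambda>_. 0)) (at y)" for y
    using F_series(2) unfolding F_def[abs_def] by simp
  have dilation: "F (real b * y) = (\<psi> y - \<psi> 0) + F y" for y
  proof -
    have "f (Suc m) (real b * y) = f m y" for m
      unfolding f_def digit_point_zeros using base by (simp add: field_simps)
    then have "F y = (\<Sum>m. f (Suc m) (real b * y))" unfolding F_def by simp
    also have "\<dots> = F (real b * y) - f 0 (real b * y)"
      unfolding F_def by (rule suminf_split_head[OF F_series(1)])
    also have "f 0 (real b * y) = \<psi> y - \<psi> 0"
      unfolding f_def digit_point_zeros using base by simp
    finally show ?thesis by simp
  qed
  have F_periodic: "F (y + 1) = F y" for y
    by (rule periodic_of_dilation_equation[OF F' D_periodic _ dilation]) (use periodic base in auto)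
  have "continuous_on UNIV F"
    using F' DERIV_continuous continuous_at_imp_continuous_on by blast
  have coboundary: "\<psi> y = F (real b * y) - F y + \<psi> 0" for y
    using dilation[of y] by simp
  have "integral {0..1} \<psi> = integral {0..1} (\<lambda>y. F (real b * y) - F y + \<psi> 0)"
    by (rule arg_cong[where f="integral {0..1}"]) (rule ext, rule coboundary)
  also have "\<dots> = \<psi> 0"
    by (rule integral_coboundary_plus_const[OF F_periodic \<open>continuous_on UNIV F\<close>]) (use base in simp)
  finally have "\<psi> 0 = 0" using mean_zero by simp
  then have "\<psi> y = F (real b * y) - F y" for y using coboundary[of y] by linarith
  then show ?thesis
    unfolding cohomologous_to_zero_def using F_periodic \<open>continuous_on UNIV F\<close> by blast
qed

lemma D_add_of_int: "D \<gamma> (x + of_int n) i = D \<gamma> x (digit_shift b n i)"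
proof -
  have "\<psi>' (digit_point b (x + of_int n) i m) = \<psi>' (digit_point b x (digit_shift b n i) m)" for m
  proof -
    obtain k where "digit_point b (x + of_int n) i m = digit_point b x (digit_shift b n i) m + of_int k"
      using digit_point_add_of_int base by (metis not_numeral_le_zero not_gr_zero)
    then show ?thesis using periodic_add_of_int[of \<psi>', OF deriv_periodic] by simp
  qed
  then show ?thesis unfolding S_termwise_deriv_def by simp
qed

section \<open>Non-tangency\<close>

definition spread_le :: "real \<Rightarrow> real \<Rightarrow> real \<Rightarrow> bool" where
  "spread_le \<gamma> x c \<longleftrightarrow>
     (\<forall>p q. digit_seq b p \<longrightarrow> digit_seq b q \<longrightarrow> \<bar>D \<gamma> x p - D \<gamma> x q\<bar> \<le> c)"

lemma spread_le_mono: "spread_le \<gamma> x c \<Longrightarrow> c \<le> c' \<Longrightarrow> spread_le \<gamma> x c'"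
  unfolding spread_le_def by force

lemma spread_le_digit_preimage:
  assumes "0 < \<gamma>" "\<gamma> \<le> 1" and "spread_le \<gamma> x c" and "a < b"
  shows "spread_le \<gamma> ((x + real a) / real b) (real b / \<gamma> * c)"
  unfolding spread_le_def
proof (intro allI impI)
  fix p q
  assume "digit_seq b p" "digit_seq b q"
  define y where "y = (x + real a) / real b"
  define ap where "ap n = (if n = 0 then a else p (n - 1))" for n
  define aq where "aq n = (if n = 0 then a else q (n - 1))" for n
  have "digit_seq b ap" "digit_seq b aq"
    using \<open>digit_seq b p\<close> \<open>digit_seq b q\<close> \<open>a < b\<close> unfolding ap_def aq_def digit_seq_def by auto
  with \<open>spread_le \<gamma> x c\<close> have "\<bar>D \<gamma> x ap - D \<gamma> x aq\<bar> \<le> c" unfolding spread_le_def by blast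
  moreover have "D \<gamma> x ap = (\<psi>' y + \<gamma> * D \<gamma> y p) / real b"
    and "D \<gamma> x aq = (\<psi>' y + \<gamma> * D \<gamma> y q) / real b"
    using D_Cons[of \<gamma> x ap] D_Cons[of \<gamma> x aq] assms unfolding y_def by (simp_all add: ap_def aq_def)
  ultimately have "\<gamma> / real b * \<bar>D \<gamma> y p - D \<gamma> y q\<bar> \<le> c"
    using assms base by (simp add: abs_mult right_diff_distrib[symmetric] diff_divide_distrib[symmetric])
  then show "\<bar>D \<gamma> y p - D \<gamma> y q\<bar> \<le> real b / \<gamma> * c"
    using assms base by (simp add: field_simps)
qed

lemma spread_le_power_preimage:
  assumes "0 < \<gamma>" "\<gamma> \<le> 1"
  shows "spread_le \<gamma> x c \<Longrightarrow> A < b ^ M \<Longrightarrow>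
           spread_le \<gamma> ((x + real A) / real b ^ M) ((real b / \<gamma>) ^ M * c)"
proof (induction M arbitrary: x c A)
  case 0
  then show ?case by simp
next
  case (Suc M)
  have "A div b < b ^ M"
    using Suc.prems(2) base by (simp add: div_less_iff_less_mult mult.commute)
  moreover have "spread_le \<gamma> ((x + real (A mod b)) / real b) (real b / \<gamma> * c)"
    using spread_le_digit_preimage[OF assms Suc.prems(1)] base by simp
  ultimately have "spread_le \<gamma> (((x + real (A mod b)) / real b + real (A div b)) / real b ^ M)
                     ((real b / \<gamma>) ^ M * (real b / \<gamma> * c))"
    using Suc.IH by blast
  moreover have "real A = real (A mod b) + real b * real (A div b)"
    by (metis of_nat_add of_nat_mult mod_div_mult_eq add.commute mult.commute)
  ultimately show ?case using base by (simp add: field_simps)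
qed

lemma D_gap_persists:
  assumes "D 1 x0 p \<noteq> D 1 x0 q"
  obtains \<gamma>0 \<delta> where "\<gamma>0 < 1" "\<delta> > 0"
    "\<And>\<gamma> s. \<gamma>0 < \<gamma> \<Longrightarrow> \<gamma> \<le> 1 \<Longrightarrow> \<bar>s\<bar> < \<delta> \<Longrightarrow>
       \<bar>D 1 x0 p - D 1 x0 q\<bar> / 2 < \<bar>D \<gamma> (x0 + s) p - D \<gamma> (x0 + s) q\<bar>"
proof -
  define c where "c = \<bar>D 1 x0 p - D 1 x0 q\<bar>"
  have "c > 0" using assms unfolding c_def by simp
  then obtain \<delta> where "\<delta> > 0"
    and unif: "\<And>u v. \<bar>u - v\<bar> < \<delta> \<Longrightarrow> \<bar>\<psi>' u - \<psi>' v\<bar> < c / 8"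
    using periodic_continuous_uniformly_continuous[of \<psi>', OF deriv_periodic deriv_continuous, of "c / 8"]
    by auto
  define \<gamma>0 where "\<gamma>0 = max 0 (1 - c / (8 * M1))"
  have "\<gamma>0 < 1" unfolding \<gamma>0_def using \<open>c > 0\<close> M1(1) by simp
  moreover have "c / 2 < \<bar>D \<gamma> (x0 + s) p - D \<gamma> (x0 + s) q\<bar>"
    if "\<gamma>0 < \<gamma>" "\<gamma> \<le> 1" "\<bar>s\<bar> < \<delta>" for \<gamma> s
  proof -
    have "0 \<le> \<gamma>" "1 - \<gamma> < c / (8 * M1)" using that unfolding \<gamma>0_def by auto
    then have "M1 * (1 - \<gamma>) < c / 8" using M1(1) by (simp add: field_simps)
    have "\<bar>D \<gamma> (x0 + s) i - D 1 x0 i\<bar> < c / 4" for i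
    proof -
      have "\<bar>D \<gamma> (x0 + s) i - D 1 (x0 + s) i\<bar> < c / 8"
        using D_close_to_D_1[OF \<open>0 \<le> \<gamma>\<close> \<open>\<gamma> \<le> 1\<close>] \<open>M1 * (1 - \<gamma>) < c / 8\<close>
        by (rule le_less_trans)
      moreover have "\<bar>D 1 (x0 + s) i - D 1 x0 i\<bar> \<le> c / 8"
        using unif \<open>\<bar>s\<bar> < \<delta>\<close> by (intro D_continuity[of 1 \<delta>]) (auto intro: less_imp_le)
      ultimately show ?thesis by linarith
    qed
    from this[of p] this[of q] show ?thesis
      unfolding c_def by (auto simp: abs_real_def split: if_splits)
  qed
  ultimately show ?thesis using that \<open>\<delta> > 0\<close> unfolding c_def by blast
qed

lemma D_spread_everywhere:
  assumes "D 1 x0 p \<noteq> D 1 x0 q" "digit_seq b p" "digit_seq b q"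
  obtains \<gamma>1 c where "\<gamma>1 \<in> {0<..<1}" "c > 0"
    and "\<And>\<gamma> x. \<gamma>1 < \<gamma> \<Longrightarrow> \<gamma> \<le> 1 \<Longrightarrow> \<not> spread_le \<gamma> x c"
proof -
  define c1 where "c1 = \<bar>D 1 x0 p - D 1 x0 q\<bar>"
  obtain \<gamma>0 \<delta> where "\<gamma>0 < 1" "\<delta> > 0"
    and gap: "\<And>\<gamma> s. \<gamma>0 < \<gamma> \<Longrightarrow> \<gamma> \<le> 1 \<Longrightarrow> \<bar>s\<bar> < \<delta> \<Longrightarrow>
                c1 / 2 < \<bar>D \<gamma> (x0 + s) p - D \<gamma> (x0 + s) q\<bar>"
    using D_gap_persists[OF assms(1)] unfolding c1_def by blast
  obtain M where M: "(1 / real b) ^ M < \<delta>"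
    using real_arch_pow_inv[OF \<open>\<delta> > 0\<close>, of "1 / real b"] base_gt_1 by auto
  define c where "c = (c1 / 2) / (2 * real b) ^ M"
  define \<gamma>1 where "\<gamma>1 = max (1 / 2) \<gamma>0"
  have "\<gamma>1 \<in> {0<..<1}" unfolding \<gamma>1_def using \<open>\<gamma>0 < 1\<close> by auto
  moreover have "c > 0" unfolding c_def c1_def using assms(1) base by simp
  moreover have "\<not> spread_le \<gamma> x c" if "\<gamma>1 < \<gamma>" "\<gamma> \<le> 1" for \<gamma> x
  proof
    assume "spread_le \<gamma> x c"
    have "0 < \<gamma>" "\<gamma>0 < \<gamma>" using that unfolding \<gamma>1_def by auto
    obtain A t where "A < b ^ M" and near: "\<bar>(x + real A) / real b ^ M + of_int t - x0\<bar> < (1 / real b) ^ M"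
      using b_adic_approximation[of b M x x0] base by auto
    define y where "y = (x + real A) / real b ^ M"
    have "1 \<le> 2 * \<gamma>" using \<open>\<gamma>1 < \<gamma>\<close> unfolding \<gamma>1_def by simp
    then have "real b / \<gamma> \<le> 2 * real b"
      using mult_right_mono[of 1 "2 * \<gamma>" "real b"] \<open>0 < \<gamma>\<close> by (simp add: divide_le_eq mult_ac)
    then have "(real b / \<gamma>) ^ M * c \<le> (2 * real b) ^ M * c"
      using \<open>0 < \<gamma>\<close> \<open>c > 0\<close> by (intro mult_right_mono power_mono) auto
    also have "\<dots> = c1 / 2" unfolding c_def using base by simp
    finally have "spread_le \<gamma> y (c1 / 2)"
      using spread_le_power_preimage[OF \<open>0 < \<gamma>\<close> \<open>\<gamma> \<le> 1\<close> \<open>spread_le \<gamma> x c\<close> \<open>A < b ^ M\<close>]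
        spread_le_mono unfolding y_def by blast
    then have "\<bar>D \<gamma> y (digit_shift b t p) - D \<gamma> y (digit_shift b t q)\<bar> \<le> c1 / 2"
      unfolding spread_le_def using digit_seq_digit_shift base by simp
    moreover have "\<bar>y + of_int t - x0\<bar> < \<delta>" using near M unfolding y_def by linarith
    from gap[OF \<open>\<gamma>0 < \<gamma>\<close> \<open>\<gamma> \<le> 1\<close> this]
    have "c1 / 2 < \<bar>D \<gamma> y (digit_shift b t p) - D \<gamma> y (digit_shift b t q)\<bar>"
      by (simp add: D_add_of_int)
    ultimately show False by linarith
  qed
  ultimately show ?thesis using that by blast
qed

lemma E_not_full_if_not_spread_le:
  assumes "0 \<le> \<gamma>" "\<gamma> < 1" and "\<not> spread_le \<gamma> x c" and tail: "2 * M1 / real b ^ N \<le> c / 4"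
  shows "E b \<gamma> \<psi> N x \<noteq> words b N \<times> words b N"
proof
  assume full: "E b \<gamma> \<psi> N x = words b N \<times> words b N"
  obtain p q where "digit_seq b p" "digit_seq b q" and far: "c < \<bar>D \<gamma> x p - D \<gamma> x q\<bar>"
    using \<open>\<not> spread_le \<gamma> x c\<close> unfolding spread_le_def not_all not_imp not_le by blast
  define k where "k = map p [0..<N]"
  define l where "l = map q [0..<N]"
  have "k \<in> words b N" "l \<in> words b N"
    using \<open>digit_seq b p\<close> \<open>digit_seq b q\<close> unfolding k_def l_def words_def digit_seq_def by auto
  then have "(k, l) \<in> E b \<gamma> \<psi> N x" using full by simp
  moreover have "0 < 2 * M1 / real b ^ N" using M1(1) base by simp
  with tail have "c > 0" by linarith
  ultimately have "(k, l) \<in> E_eps b \<gamma> \<psi> N x 1 (c / 2)"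
    unfolding E_def by simp
  then obtain u v where "tangent b \<gamma> \<psi> 1 (c / 2) x (concat_seq k u) (concat_seq l v)"
    unfolding E_eps_def by auto
  then have "\<bar>D \<gamma> x (concat_seq k u) - D \<gamma> x (concat_seq l v)\<bar> \<le> c / 2"
    unfolding tangent_def S'_eq_D[OF assms(1,2)] by simp
  moreover have "\<bar>D \<gamma> x (concat_seq k u) - D \<gamma> x p\<bar> \<le> 2 * M1 / real b ^ N"
    using assms by (intro D_prefix_close) (auto simp: concat_seq_def k_def)
  moreover have "\<bar>D \<gamma> x (concat_seq l v) - D \<gamma> x q\<bar> \<le> 2 * M1 / real b ^ N"
    using assms by (intro D_prefix_close) (auto simp: concat_seq_def l_def)
  ultimately show False using far tail by linarith
qed

lemma exists_tail_bound:
  assumes "c > 0"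
  obtains N where "N > 0" "2 * M1 / real b ^ N \<le> c / 4"
proof -
  obtain N0 where "(1 / real b) ^ N0 < c / (8 * M1)"
    using real_arch_pow_inv[of "c / (8 * M1)" "1 / real b"] assms M1(1) base_gt_1 by auto
  moreover have "(1 / real b) ^ Suc N0 \<le> (1 / real b) ^ N0"
    using base by (intro power_decreasing) auto
  ultimately have "2 * M1 * (1 / real b) ^ Suc N0 \<le> 2 * M1 * (c / (8 * M1))"
    using M1(1) by (intro mult_left_mono) auto
  then have "2 * M1 / real b ^ Suc N0 \<le> c / 4"
    using M1(1) by (simp add: power_divide)
  then show ?thesis using that by blast
qed

end

theorem lemma2p7:
  fixes b :: nat and \<psi> :: "real \<Rightarrow> real"
  assumes "b \<ge> 2"
    and "\<And>x. \<psi> (x + 1) = \<psi> x"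
    and "\<And>x. \<psi> differentiable at x"
    and "continuous_on UNIV (deriv \<psi>)"
    and "\<not> cohomologous_to_zero b \<psi>"
    and "integral {0..1} \<psi> = 0"
  shows "\<exists>\<gamma>1 \<in> {0<..<1}. \<exists>N::nat. N > 0 \<and>
           (\<forall>\<gamma>. \<gamma>1 < \<gamma> \<and> \<gamma> < 1 \<and> \<gamma> > 1 / real b \<longrightarrow>
              (\<forall>x. E b \<gamma> \<psi> N x \<noteq> words b N \<times> words b N))"
proof -
  interpret periodic_C1 b \<psi> using assms(1-4) by unfold_locales
  define e1 :: "nat \<Rightarrow> nat" where "e1 n = (if n = 0 then 1 else 0)" for n
  have "digit_seq b e1" "digit_seq b (\<lambda>_. 0)"
    using assms(1) unfolding e1_def digit_seq_def by auto
  obtain x0 where "D 1 x0 e1 \<noteq> D 1 x0 (\<lambda>_. 0)"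
    using cohomologous_to_zero_if_D_periodic assms(5,6) unfolding e1_def D_unit_digit by metis
  then obtain \<gamma>1 c where "\<gamma>1 \<in> {0<..<1}" "c > 0"
    and spread: "\<And>\<gamma> x. \<gamma>1 < \<gamma> \<Longrightarrow> \<gamma> \<le> 1 \<Longrightarrow> \<not> spread_le \<gamma> x c"
    using D_spread_everywhere \<open>digit_seq b e1\<close> \<open>digit_seq b (\<lambda>_. 0)\<close> by metis
  obtain N where "N > 0" "2 * M1 / real b ^ N \<le> c / 4"
    using exists_tail_bound[OF \<open>c > 0\<close>] .
  have "E b \<gamma> \<psi> N x \<noteq> words b N \<times> words b N" if "\<gamma>1 < \<gamma>" "\<gamma> < 1" for \<gamma> x
    using E_not_full_if_not_spread_le[OF _ \<open>\<gamma> < 1\<close> spread] that \<open>\<gamma>1 \<in> {0<..<1}\<close>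
      \<open>2 * M1 / real b ^ N \<le> c / 4\<close> by auto
  then show ?thesis using \<open>\<gamma>1 \<in> {0<..<1}\<close> \<open>N > 0\<close> by blast
qed

end
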